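(* The set $\widehat{M}_V$ of pricing measures with finite loss-entropy is convex.
   Context: Let $(\Omega,\mathcal{F},\mathbb{P})$ be a probability space and $K\subseteq L^0(\mathbb{P})$ a convex cone (of terminal wealths). Let $a\in[-\infty,\infty)$ and $U:(a,\infty)\to\mathbb{R}$ be increasing, strictly concave, continuously differentiable with $\lim_{x\downarrow a}U'(x)=\infty$ and $\lim_{x\uparrow\infty}U'(x)=0$; if $a=-\infty$, assume moreover $\liminf_{x\to-\infty}\frac{xU'(x)}{U(x)}>1$. Let $V(y)=\sup_{x\in(a,\infty)}\{U(x)-xy\}$ for $y>0$ and $V^+=\max\{V,0\}$. Define $M_1=\{\mathbb{Q}\ll\mathbb{P}: X\in L^1(\mathbb{Q})\text{ and }\mathbb{E}_{\mathbb{Q}}[X]\le 0\text{ for all }X\in K\}$. A measure $\mathbb{Q}\ll\mathbb{P}$ has finite loss-entropy if there is a constant $b>0$ with $\mathbb{E}_{\mathbb{P}}\big[V^+\big(\tfrac{d\mathbb{Q}}{d\mathbb{P}}\big)\mathbf{1}_{\{d\mathbb{Q}/d\mathbb{P}\ge b\}}\big]<\infty$. Set $\widehat{M}_V=\{\mathbb{Q}\in M_1:\mathbb{Q}\text{ has finite loss-entropy}\}$. *)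

theory Defs
  imports "HOL-Probability.Probability"
begin

definition strictly_concave_on :: "real set \<Rightarrow> (real \<Rightarrow> real) \<Rightarrow> bool" where
  "strictly_concave_on S f \<longleftrightarrow>
     (\<forall>x\<in>S. \<forall>y\<in>S. x \<noteq> y \<longrightarrow> (\<forall>t::real. 0 < t \<and> t < 1 \<longrightarrow>
        f ((1 - t) * x + t * y) > (1 - t) * f x + t * f y))"

definition conj_fn :: "ereal \<Rightarrow> (real \<Rightarrow> real) \<Rightarrow> real \<Rightarrow> real" where
  "conj_fn a U y = (SUP x\<in>{x. a < ereal x}. U x - x * y)"

definition pricing_measures :: "'a measure \<Rightarrow> ('a \<Rightarrow> real) set \<Rightarrow> 'a measure set" where
  "pricing_measures P K =
     {Q. sets Q = sets P \<and> prob_space Q \<and> absolutely_continuous P Q \<and>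
         (\<forall>X\<in>K. integrable Q X \<and> (\<integral>\<omega>. X \<omega> \<partial>Q) \<le> 0)}"

definition finite_loss_entropy :: "'a measure \<Rightarrow> (real \<Rightarrow> real) \<Rightarrow> 'a measure \<Rightarrow> bool" where
  "finite_loss_entropy P V Q \<longleftrightarrow>
     (\<exists>b::real. b > 0 \<and>
        (\<integral>\<^sup>+\<omega>. ennreal (max (V (enn2real (RN_deriv P Q \<omega>))) 0 *
                  indicator {\<omega>'. b \<le> enn2real (RN_deriv P Q \<omega>')} \<omega>) \<partial>P) < \<infinity>)"

definition hat_M_V :: "'a measure \<Rightarrow> ('a \<Rightarrow> real) set \<Rightarrow> ereal \<Rightarrow> (real \<Rightarrow> real) \<Rightarrow> 'a measure set" where
  "hat_M_V P K a U = {Q \<in> pricing_measures P K. finite_loss_entropy P (conj_fn a U) Q}"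

definition mix_measure :: "real \<Rightarrow> 'a measure \<Rightarrow> 'a measure \<Rightarrow> 'a measure" where
  "mix_measure t Q1 Q2 =
     measure_of (space Q1) (sets Q1) (\<lambda>A. ennreal t * emeasure Q1 A + ennreal (1 - t) * emeasure Q2 A)"

end

theory Submission imports Defs begin

text \<open>The conjugate V is a supremum of functions affine in y, hence convex on (0,\<infinity>); the
  supremum is a genuine one (not a junk value of SUP over an unbounded set) because the Inada
  conditions on U' make U x - x y bounded above. The mixture
  t Q1 + (1 - t) Q2 has density t Z1 + (1 - t) Z2, so membership in M_1 is preserved by linearity
  of the integral. For the loss-entropy, a convex function on an interval is bounded by its values
  at the end points; on the set where the mixed density exceeds b = max b1 b2, the larger of Z1, Z2
  exceeds its own threshold, whence
  V+(Z) 1{Z \<ge> b} \<le> V+(b) + V+(Z1) 1{Z1 \<ge> b1} + V+(Z2) 1{Z2 \<ge> b2}.\<close>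

lemma strictly_concave_on_imp_concave_on:
  assumes "convex S" and "strictly_concave_on S U"
  shows "concave_on S U"
proof (rule concave_on_linorderI[OF _ \<open>convex S\<close>])
  fix t x y :: real assume "0 < t" "t < 1" "x \<in> S" "y \<in> S" "x < y"
  then have "(1 - t) * U x + t * U y < U ((1 - t) * x + t * y)"
    using assms(2) unfolding strictly_concave_on_def by simp
  then show "(1 - t) * U x + t * U y \<le> U ((1 - t) *\<^sub>R x + t *\<^sub>R y)" by simp
qed

lemma concave_on_below_tangent:
  fixes U :: "real \<Rightarrow> real"
  assumes "concave_on S U" and "open S" and "c \<in> S" and "x \<in> S"
    and "(U has_real_derivative D) (at c)"
  shows "U x \<le> U c + D * (x - c)"
proof -
  have "- D * (x - c) \<le> - U x - - U c"
  proof (rule convex_on_imp_above_tangent)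
    show "convex_on S (\<lambda>x. - U x)" using assms(1) by (simp add: concave_on_def)
    show "connected S" using assms(1) by (simp add: concave_on_imp_convex convex_connected)
    show "c \<in> interior S" using assms(2,3) by (simp add: interior_open)
    show "((\<lambda>x. - U x) has_field_derivative - D) (at c within S)"
      by (rule has_field_derivative_at_within[OF DERIV_minus[OF assms(5)]])
  qed (rule assms(4))
  then show ?thesis by (simp add: algebra_simps)
qed

lemma bdd_above_concave_minus_linear:
  fixes U U' :: "real \<Rightarrow> real"
  assumes conc: "concave_on S U" and "open S"
    and deriv: "\<And>x. x \<in> S \<Longrightarrow> (U has_real_derivative U' x) (at x)"
    and x1: "x1 \<in> S" "y \<le> U' x1" and x0: "x0 \<in> S" "U' x0 \<le> y" and "x1 \<le> x0"
  shows "bdd_above ((\<lambda>x. U x - x * y) ` S)"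
proof (rule bdd_aboveI2)
  fix x assume x: "x \<in> S"
  have tangent: "U x \<le> U c + U' c * (x - c)" if "c \<in> S" for c
    using concave_on_below_tangent[OF conc \<open>open S\<close> that x deriv[OF that]] .
  show "U x - x * y \<le> max (U x0 - x0 * y) (U x1 - x1 * y + (U' x1 - y) * (x0 - x1))"
  proof (cases "x0 \<le> x")
    case True
    have "(U' x0 - y) * (x - x0) \<le> 0" using True x0 by (simp add: mult_nonpos_nonneg)
    then show ?thesis using tangent[OF x0(1)] by (simp add: algebra_simps)
  next
    case False
    have "(U' x1 - y) * (x - x1) \<le> (U' x1 - y) * (x0 - x1)"
      using False x1 by (intro mult_left_mono) auto
    then show ?thesis using tangent[OF x1(1)] by (simp add: algebra_simps)
  qed
qed

lemma convex_on_cSUP: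
  assumes "I \<noteq> {}" and "convex C" and convex: "\<And>i. i \<in> I \<Longrightarrow> convex_on C (f i)"
    and bdd: "\<And>y. y \<in> C \<Longrightarrow> bdd_above ((\<lambda>i. f i y) ` I)"
  shows "convex_on C (\<lambda>y. SUP i\<in>I. f i y)"
proof (rule convex_onI[OF _ \<open>convex C\<close>])
  fix t :: real and x y assume t: "0 < t" "t < 1" and xy: "x \<in> C" "y \<in> C"
  show "(SUP i\<in>I. f i ((1 - t) *\<^sub>R x + t *\<^sub>R y)) \<le> (1 - t) * (SUP i\<in>I. f i x) + t * (SUP i\<in>I. f i y)"
  proof (rule cSUP_least[OF \<open>I \<noteq> {}\<close>])
    fix i assume i: "i \<in> I"
    have "f i ((1 - t) *\<^sub>R x + t *\<^sub>R y) \<le> (1 - t) * f i x + t * f i y"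
      using t xy by (intro convex_onD[OF convex[OF i]]) auto
    also have "\<dots> \<le> (1 - t) * (SUP i\<in>I. f i x) + t * (SUP i\<in>I. f i y)"
      using t xy by (intro add_mono mult_left_mono cSUP_upper[OF i] bdd) auto
    finally show "f i ((1 - t) *\<^sub>R x + t *\<^sub>R y) \<le> \<dots>" .
  qed
qed

lemma Collect_ereal_less_eq:
  assumes "a \<noteq> \<infinity>"
  shows "{x. a < ereal x} = (if a = -\<infinity> then UNIV else {real_of_ereal a<..})"
  using assms by (cases a) auto

lemma conj_fn_bdd_above:
  fixes a :: ereal and U U' :: "real \<Rightarrow> real"
  assumes a_fin: "a \<noteq> \<infinity>"
    and U_conc: "concave_on {x. a < ereal x} U"
    and U_deriv: "\<forall>x. a < ereal x \<longrightarrow> (U has_real_derivative U' x) (at x)"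
    and U'_left: "if a = -\<infinity> then filterlim U' at_top at_bot
                  else filterlim U' at_top (at_right (real_of_ereal a))"
    and U'_right: "(U' \<longlongrightarrow> 0) at_top"
    and "0 < y"
  shows "bdd_above ((\<lambda>x. U x - x * y) ` {x. a < ereal x})"
proof -
  let ?S = "{x. a < ereal x}"
  define F where "F = (if a = -\<infinity> then at_bot else at_right (real_of_ereal a) :: real filter)"
  have "F \<noteq> bot" by (simp add: F_def)
  moreover have "eventually (\<lambda>x. y \<le> U' x \<and> x \<in> ?S) F"
  proof (rule eventually_conj)
    show "eventually (\<lambda>x. y \<le> U' x) F"
      using U'_left by (simp add: F_def filterlim_at_top split: if_splits)
    show "eventually (\<lambda>x. x \<in> ?S) F"
      using Collect_ereal_less_eq[OF a_fin] by (simp add: F_def eventually_at_right_less)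
  qed
  ultimately obtain x1 where x1: "x1 \<in> ?S" "y \<le> U' x1"
    using eventually_happens' by blast
  have "eventually (\<lambda>x. U' x < y \<and> x1 \<le> x) at_top"
    using order_tendstoD(2)[OF U'_right \<open>0 < y\<close>] eventually_ge_at_top by (rule eventually_conj)
  then obtain x0 where x0: "U' x0 < y" "x1 \<le> x0"
    using eventually_happens'[OF trivial_limit_at_top_linorder] by blast
  have "x0 \<in> ?S" using x1(1) x0(2) by (auto intro: order.strict_trans2)
  then show ?thesis
    using x1 x0 Collect_ereal_less_eq[OF a_fin] U_deriv
    by (intro bdd_above_concave_minus_linear[OF U_conc, of U' x1 y x0]) auto
qed

lemma convex_on_conj_fn:
  fixes a :: ereal and U U' :: "real \<Rightarrow> real"
  assumes a_fin: "a \<noteq> \<infinity>"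
    and U_conc: "concave_on {x. a < ereal x} U"
    and U_deriv: "\<forall>x. a < ereal x \<longrightarrow> (U has_real_derivative U' x) (at x)"
    and U'_left: "if a = -\<infinity> then filterlim U' at_top at_bot
                  else filterlim U' at_top (at_right (real_of_ereal a))"
    and U'_right: "(U' \<longlongrightarrow> 0) at_top"
  shows "convex_on {0<..} (conj_fn a U)"
  unfolding conj_fn_def
proof (rule convex_on_cSUP)
  show "{x. a < ereal x} \<noteq> {}"
    using Collect_ereal_less_eq[OF a_fin] by (auto intro: exI[of _ "real_of_ereal a + 1"])
  show "convex_on {0<..} (\<lambda>y. U x - x * y)" for x
    by (rule convex_on_linorderI) (auto simp: algebra_simps)
  show "bdd_above ((\<lambda>x. U x - x * y) ` {x. a < ereal x})" if "y \<in> {0<..}" for y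
    using that by (intro conj_fn_bdd_above[OF a_fin U_conc U_deriv U'_left U'_right]) simp
qed simp

lemma enn2real_convex_combination:
  fixes A B :: ennreal
  assumes "A \<noteq> \<infinity>" "B \<noteq> \<infinity>" "0 \<le> t" "t \<le> 1"
  shows "enn2real (ennreal t * A + ennreal (1 - t) * B) = t * enn2real A + (1 - t) * enn2real B"
proof -
  have "ennreal t * A < \<infinity>" "ennreal (1 - t) * B < \<infinity>"
    using assms by (auto simp: ennreal_mult_less_top less_top)
  then show ?thesis using assms by (simp add: enn2real_plus enn2real_mult)
qed

lemma sets_mix_measure: "sets (mix_measure t Q1 Q2) = sets Q1"
  by (simp add: mix_measure_def sets.space_closed)

lemma (in sigma_finite_measure) nn_integral_RN_deriv_mix:
  assumes Q1: "sets Q1 = sets M" "absolutely_continuous M Q1"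
    and Q2: "sets Q2 = sets M" "absolutely_continuous M Q2"
    and g: "g \<in> borel_measurable M"
  shows "(\<integral>\<^sup>+x. (ennreal t * RN_deriv M Q1 x + ennreal (1 - t) * RN_deriv M Q2 x) * g x \<partial>M)
    = ennreal t * integral\<^sup>N Q1 g + ennreal (1 - t) * integral\<^sup>N Q2 g"
proof -
  have "(\<integral>\<^sup>+x. (ennreal t * RN_deriv M Q1 x + ennreal (1 - t) * RN_deriv M Q2 x) * g x \<partial>M)
      = (\<integral>\<^sup>+x. ennreal t * (RN_deriv M Q1 x * g x) + ennreal (1 - t) * (RN_deriv M Q2 x * g x) \<partial>M)"
    by (simp add: distrib_right mult.assoc)
  also have "\<dots> = ennreal t * (\<integral>\<^sup>+x. RN_deriv M Q1 x * g x \<partial>M)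
      + ennreal (1 - t) * (\<integral>\<^sup>+x. RN_deriv M Q2 x * g x \<partial>M)"
    using g by (simp add: nn_integral_add nn_integral_cmult)
  also have "\<dots> = ennreal t * integral\<^sup>N Q1 g + ennreal (1 - t) * integral\<^sup>N Q2 g"
    using g by (simp add: RN_deriv_nn_integral[OF Q1(2,1)] RN_deriv_nn_integral[OF Q2(2,1)])
  finally show ?thesis .
qed

lemma (in sigma_finite_measure) mix_measure_eq_density:
  assumes Q1: "sets Q1 = sets M" "absolutely_continuous M Q1"
    and Q2: "sets Q2 = sets M" "absolutely_continuous M Q2"
  shows "mix_measure t Q1 Q2
    = density M (\<lambda>x. ennreal t * RN_deriv M Q1 x + ennreal (1 - t) * RN_deriv M Q2 x)"
    (is "_ = density M ?h")
proof -
  have "density M ?h = measure_of (space M) (sets M) (emeasure (density M ?h))"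
    using measure_of_of_measure[of "density M ?h"] by simp
  also have "\<dots> = measure_of (space M) (sets M)
      (\<lambda>A. ennreal t * emeasure Q1 A + ennreal (1 - t) * emeasure Q2 A)"
  proof (rule measure_of_eq[OF sets.space_closed])
    fix A assume "A \<in> sigma_sets (space M) (sets M)"
    then have A: "A \<in> sets M" by (simp add: sets.sigma_sets_eq)
    then show "emeasure (density M ?h) A = ennreal t * emeasure Q1 A + ennreal (1 - t) * emeasure Q2 A"
      using Q1(1) Q2(1)
      by (simp add: emeasure_density nn_integral_RN_deriv_mix[OF Q1 Q2] del: nn_integral_indicator)
        simp
  qed
  also have "\<dots> = mix_measure t Q1 Q2"
    using sets_eq_imp_space_eq[OF Q1(1)] Q1(1) by (simp add: mix_measure_def)
  finally show ?thesis by simp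
qed

lemma (in sigma_finite_measure) nn_integral_mix_measure:
  assumes Q1: "sets Q1 = sets M" "absolutely_continuous M Q1"
    and Q2: "sets Q2 = sets M" "absolutely_continuous M Q2"
    and g: "g \<in> borel_measurable M"
  shows "integral\<^sup>N (mix_measure t Q1 Q2) g = ennreal t * integral\<^sup>N Q1 g + ennreal (1 - t) * integral\<^sup>N Q2 g"
  using g by (simp add: mix_measure_eq_density[OF Q1 Q2] nn_integral_density nn_integral_RN_deriv_mix[OF Q1 Q2])

lemma (in sigma_finite_measure) integrable_mix_measure:
  assumes Q1: "sets Q1 = sets M" "absolutely_continuous M Q1"
    and Q2: "sets Q2 = sets M" "absolutely_continuous M Q2"
    and X: "integrable Q1 X" "integrable Q2 X"
  shows "integrable (mix_measure t Q1 Q2) (X :: 'a \<Rightarrow> real)"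
proof -
  have Xm: "X \<in> borel_measurable M"
    using borel_measurable_integrable[OF X(1)] by (simp add: measurable_cong_sets[OF Q1(1) refl])
  then show ?thesis
    using X unfolding real_integrable_def
    by (simp add: nn_integral_mix_measure[OF Q1 Q2] measurable_cong_sets[OF sets_mix_measure refl]
        measurable_cong_sets[OF Q1(1) refl] ennreal_mult_eq_top_iff)
qed

lemma (in sigma_finite_measure) integral_mix_measure:
  assumes Q1: "sets Q1 = sets M" "absolutely_continuous M Q1"
    and Q2: "sets Q2 = sets M" "absolutely_continuous M Q2"
    and X: "integrable Q1 X" "integrable Q2 X"
    and t: "0 \<le> t" "t \<le> 1"
  shows "(\<integral>x. X x \<partial>mix_measure t Q1 Q2) = t * (\<integral>x. X x \<partial>Q1) + (1 - t) * (\<integral>x. X x \<partial>Q2)"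
proof -
  have Xm: "X \<in> borel_measurable M"
    using borel_measurable_integrable[OF X(1)] by (simp add: measurable_cong_sets[OF Q1(1) refl])
  have fin: "(\<integral>\<^sup>+x. ennreal (X x) \<partial>Q1) \<noteq> \<infinity>" "(\<integral>\<^sup>+x. ennreal (- X x) \<partial>Q1) \<noteq> \<infinity>"
    "(\<integral>\<^sup>+x. ennreal (X x) \<partial>Q2) \<noteq> \<infinity>" "(\<integral>\<^sup>+x. ennreal (- X x) \<partial>Q2) \<noteq> \<infinity>"
    using X by (auto simp: real_integrable_def)
  show ?thesis
    using Xm fin t
    by (simp add: real_lebesgue_integral_def integrable_mix_measure[OF Q1 Q2 X] X
        nn_integral_mix_measure[OF Q1 Q2] enn2real_convex_combination algebra_simps)
qed

lemma (in sigma_finite_measure) prob_space_mix_measure: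
  assumes Q1: "sets Q1 = sets M" "absolutely_continuous M Q1" "prob_space Q1"
    and Q2: "sets Q2 = sets M" "absolutely_continuous M Q2" "prob_space Q2"
    and t: "0 \<le> t" "t \<le> 1"
  shows "prob_space (mix_measure t Q1 Q2)"
proof (rule prob_spaceI)
  have "emeasure (mix_measure t Q1 Q2) (space (mix_measure t Q1 Q2)) = (\<integral>\<^sup>+x. 1 \<partial>mix_measure t Q1 Q2)"
    by simp
  also have "\<dots> = ennreal t + ennreal (1 - t)"
    unfolding nn_integral_mix_measure[OF Q1(1,2) Q2(1,2) borel_measurable_const]
    using prob_space.emeasure_space_1[OF Q1(3)] prob_space.emeasure_space_1[OF Q2(3)] by simp
  also have "\<dots> = 1" using t by (simp flip: ennreal_plus)
  finally show "emeasure (mix_measure t Q1 Q2) (space (mix_measure t Q1 Q2)) = 1" .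
qed

lemma (in sigma_finite_measure) absolutely_continuous_mix_measure:
  assumes "sets Q1 = sets M" "absolutely_continuous M Q1"
    and "sets Q2 = sets M" "absolutely_continuous M Q2"
  shows "absolutely_continuous M (mix_measure t Q1 Q2)"
  unfolding mix_measure_eq_density[OF assms] by (rule absolutely_continuousI_density) measurable

lemma mix_measure_in_pricing_measures:
  assumes "sigma_finite_measure P"
    and "Q1 \<in> pricing_measures P K" "Q2 \<in> pricing_measures P K"
    and "0 \<le> t" "t \<le> 1"
  shows "mix_measure t Q1 Q2 \<in> pricing_measures P K"
proof -
  interpret sigma_finite_measure P by fact
  have Q1: "sets Q1 = sets P" "absolutely_continuous P Q1" "prob_space Q1"
    and K1: "\<And>X. X \<in> K \<Longrightarrow> integrable Q1 X \<and> (\<integral>\<omega>. X \<omega> \<partial>Q1) \<le> 0"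
    using assms(2) by (auto simp: pricing_measures_def)
  have Q2: "sets Q2 = sets P" "absolutely_continuous P Q2" "prob_space Q2"
    and K2: "\<And>X. X \<in> K \<Longrightarrow> integrable Q2 X \<and> (\<integral>\<omega>. X \<omega> \<partial>Q2) \<le> 0"
    using assms(3) by (auto simp: pricing_measures_def)
  have "integrable (mix_measure t Q1 Q2) X \<and> (\<integral>\<omega>. X \<omega> \<partial>mix_measure t Q1 Q2) \<le> 0" if "X \<in> K" for X
    using K1[OF that] K2[OF that] assms(4,5)
    by (simp add: integrable_mix_measure[OF Q1(1,2) Q2(1,2)] integral_mix_measure[OF Q1(1,2) Q2(1,2)]
        add_nonpos_nonpos mult_nonneg_nonpos)
  then show ?thesis
    using Q1 Q2 assms(4,5)
    by (simp add: pricing_measures_def sets_mix_measure prob_space_mix_measure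
        absolutely_continuous_mix_measure)
qed

definition tail_loss :: "(real \<Rightarrow> real) \<Rightarrow> real \<Rightarrow> real \<Rightarrow> real" where
  "tail_loss V b y = max (V y) 0 * indicator {b..} y"

lemma finite_loss_entropy_iff_tail_loss:
  "finite_loss_entropy P V Q \<longleftrightarrow>
    (\<exists>b>0. (\<integral>\<^sup>+\<omega>. ennreal (tail_loss V b (enn2real (RN_deriv P Q \<omega>))) \<partial>P) < \<infinity>)"
  by (simp add: finite_loss_entropy_def tail_loss_def indicator_def)

lemma tail_loss_nonneg: "0 \<le> tail_loss V b y"
  by (simp add: tail_loss_def)

lemma borel_measurable_tail_loss:
  assumes "continuous_on {0<..} V" and "0 < b"
  shows "tail_loss V b \<in> borel_measurable borel"
proof -
  have "continuous_on {b..} (\<lambda>y. max (V y) 0)"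
    using assms by (intro continuous_on_max continuous_on_const continuous_on_subset[OF assms(1)]) auto
  then have "(\<lambda>y. indicator {b..} y *\<^sub>R max (V y) 0) \<in> borel_measurable borel"
    by (intro borel_measurable_continuous_on_indicator) auto
  then show ?thesis by (simp add: tail_loss_def[abs_def] mult.commute)
qed

lemma tail_loss_convex_combination_le:
  fixes V :: "real \<Rightarrow> real"
  assumes V: "convex_on {0<..} V" and "0 < b1" "0 < b2"
    and t: "0 \<le> t" "t \<le> 1"
  shows "tail_loss V (max b1 b2) (t * y1 + (1 - t) * y2)
    \<le> max (V (max b1 b2)) 0 + tail_loss V b1 y1 + tail_loss V b2 y2"
proof -
  define b where "b = max b1 b2"
  define y where "y = t * y1 + (1 - t) * y2"
  have y_le: "y \<le> max y1 y2"
    using convex_bound_le[of y1 "max y1 y2" y2 t "1 - t"] t by (simp add: y_def)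
  have key: "max (V y) 0 \<le> max (V b) 0 + tail_loss V b' z"
    if "b \<le> y" "y \<le> z" "b' \<le> b" for z b'
  proof -
    have "convex_on {b..z} V"
      by (rule convex_on_subset[OF V]) (use \<open>0 < b1\<close> in \<open>auto simp: b_def\<close>)
    then have "V y \<le> max (V b) (V z)" using that by (intro convex_on_le_max) auto
    moreover have "tail_loss V b' z = max (V z) 0" using that by (simp add: tail_loss_def)
    ultimately show ?thesis by (auto simp: max_def split: if_splits)
  qed
  have "tail_loss V b y \<le> max (V b) 0 + tail_loss V b1 y1 + tail_loss V b2 y2"
  proof (cases "b \<le> y")
    case False
    then show ?thesis by (simp add: tail_loss_def tail_loss_nonneg)
  next
    case True
    then have "tail_loss V b y = max (V y) 0" by (simp add: tail_loss_def)
    moreover have "max (V y) 0 \<le> max (V b) 0 + tail_loss V b1 y1 + tail_loss V b2 y2"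
    proof (cases "y2 \<le> y1")
      case True
      then show ?thesis using key[of y1 b1] \<open>b \<le> y\<close> y_le tail_loss_nonneg[of V b2 y2]
        by (simp add: b_def)
    next
      case False
      then show ?thesis using key[of y2 b2] \<open>b \<le> y\<close> y_le tail_loss_nonneg[of V b1 y1]
        by (simp add: b_def)
    qed
    ultimately show ?thesis by simp
  qed
  then show ?thesis by (simp add: b_def y_def)
qed

lemma (in sigma_finite_measure) AE_RN_deriv_mix_measure:
  assumes Q1: "sets Q1 = sets M" "absolutely_continuous M Q1" "sigma_finite_measure Q1"
    and Q2: "sets Q2 = sets M" "absolutely_continuous M Q2" "sigma_finite_measure Q2"
    and t: "0 \<le> t" "t \<le> 1"
  shows "AE x in M. enn2real (RN_deriv M (mix_measure t Q1 Q2) x)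
    = t * enn2real (RN_deriv M Q1 x) + (1 - t) * enn2real (RN_deriv M Q2 x)"
proof -
  have "AE x in M. ennreal t * RN_deriv M Q1 x + ennreal (1 - t) * RN_deriv M Q2 x
      = RN_deriv M (mix_measure t Q1 Q2) x"
    by (rule RN_deriv_unique) (simp_all add: mix_measure_eq_density[OF Q1(1,2) Q2(1,2)])
  moreover have "AE x in M. RN_deriv M Q1 x \<noteq> \<infinity>" "AE x in M. RN_deriv M Q2 x \<noteq> \<infinity>"
    using RN_deriv_finite[OF Q1(3) Q1(2,1)] RN_deriv_finite[OF Q2(3) Q2(2,1)] .
  ultimately show ?thesis
    by eventually_elim (metis enn2real_convex_combination t)
qed

lemma finite_loss_entropy_mix_measure:
  assumes "finite_measure P" and V: "convex_on {0<..} V"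
    and Q1: "sets Q1 = sets P" "absolutely_continuous P Q1" "sigma_finite_measure Q1"
      "finite_loss_entropy P V Q1"
    and Q2: "sets Q2 = sets P" "absolutely_continuous P Q2" "sigma_finite_measure Q2"
      "finite_loss_entropy P V Q2"
    and t: "0 \<le> t" "t \<le> 1"
  shows "finite_loss_entropy P V (mix_measure t Q1 Q2)"
proof -
  interpret finite_measure P by fact
  have V_cont: "continuous_on {0<..} V" by (rule convex_on_continuous[OF open_greaterThan V])
  define Z1 where "Z1 x = enn2real (RN_deriv P Q1 x)" for x
  define Z2 where "Z2 x = enn2real (RN_deriv P Q2 x)" for x
  obtain b1 where b1: "0 < b1" "(\<integral>\<^sup>+x. ennreal (tail_loss V b1 (Z1 x)) \<partial>P) < \<infinity>"
    using Q1(4) by (auto simp: finite_loss_entropy_iff_tail_loss Z1_def)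
  obtain b2 where b2: "0 < b2" "(\<integral>\<^sup>+x. ennreal (tail_loss V b2 (Z2 x)) \<partial>P) < \<infinity>"
    using Q2(4) by (auto simp: finite_loss_entropy_iff_tail_loss Z2_def)
  note [measurable] = borel_measurable_tail_loss[OF V_cont b1(1)] borel_measurable_tail_loss[OF V_cont b2(1)]
  define b where "b = max b1 b2"
  have "(\<integral>\<^sup>+x. ennreal (tail_loss V b (enn2real (RN_deriv P (mix_measure t Q1 Q2) x))) \<partial>P)
      \<le> (\<integral>\<^sup>+x. ennreal (max (V b) 0) + ennreal (tail_loss V b1 (Z1 x)) + ennreal (tail_loss V b2 (Z2 x)) \<partial>P)"
    using AE_RN_deriv_mix_measure[OF Q1(1-3) Q2(1-3) t]
  proof (intro nn_integral_mono_AE, eventually_elim)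
    case (elim x)
    then have "tail_loss V b (enn2real (RN_deriv P (mix_measure t Q1 Q2) x))
        \<le> max (V b) 0 + tail_loss V b1 (Z1 x) + tail_loss V b2 (Z2 x)"
      using tail_loss_convex_combination_le[OF V b1(1) b2(1) t] by (simp add: Z1_def Z2_def b_def)
    then show ?case
      by (subst (asm) ennreal_le_iff[symmetric]) (simp_all add: tail_loss_nonneg)
  qed
  also have "\<dots> = ennreal (max (V b) 0) * emeasure P (space P) + (\<integral>\<^sup>+x. ennreal (tail_loss V b1 (Z1 x)) \<partial>P)
      + (\<integral>\<^sup>+x. ennreal (tail_loss V b2 (Z2 x)) \<partial>P)"
    by (simp add: nn_integral_add Z1_def Z2_def)
  also have "\<dots> < \<infinity>" using b1(2) b2(2) by (simp add: ennreal_mult_less_top less_top[symmetric] ennreal_mult_eq_top_iff)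
  finally have "(\<integral>\<^sup>+x. ennreal (tail_loss V b (enn2real (RN_deriv P (mix_measure t Q1 Q2) x))) \<partial>P) < \<infinity>" .
  moreover have "0 < b" using b1(1) by (simp add: b_def)
  ultimately show ?thesis unfolding finite_loss_entropy_iff_tail_loss by blast
qed

theorem lemma3p3:
  fixes P :: "'a measure" and K :: "('a \<Rightarrow> real) set"
    and a :: ereal and U U' :: "real \<Rightarrow> real"
  assumes P: "prob_space P"
    and K_L0: "K \<subseteq> borel_measurable P"
    and K_cone: "\<forall>X\<in>K. \<forall>Y\<in>K. \<forall>\<alpha>\<ge>0. \<forall>\<beta>\<ge>0. (\<lambda>\<omega>. \<alpha> * X \<omega> + \<beta> * Y \<omega>) \<in> K"
    and a_fin: "a \<noteq> \<infinity>"
    and U_mono: "mono_on {x. a < ereal x} U"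
    and U_conc: "strictly_concave_on {x. a < ereal x} U"
    and U_deriv: "\<forall>x. a < ereal x \<longrightarrow> (U has_real_derivative U' x) (at x)"
    and U'_cont: "continuous_on {x. a < ereal x} U'"
    and U'_left: "if a = -\<infinity> then filterlim U' at_top at_bot
                  else filterlim U' at_top (at_right (real_of_ereal a))"
    and U'_right: "(U' \<longlongrightarrow> 0) at_top"
    and AE_cond: "a = -\<infinity> \<longrightarrow> Liminf at_bot (\<lambda>x. ereal (x * U' x / U x)) > 1"
    and Q1: "Q1 \<in> hat_M_V P K a U"
    and Q2: "Q2 \<in> hat_M_V P K a U"
    and t: "0 \<le> t" "t \<le> 1"
  shows "mix_measure t Q1 Q2 \<in> hat_M_V P K a U"
proof -
  have "concave_on {x. a < ereal x} U"
    using Collect_ereal_less_eq[OF a_fin] U_conc by (intro strictly_concave_on_imp_concave_on) auto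
  then have V: "convex_on {0<..} (conj_fn a U)"
    by (rule convex_on_conj_fn[OF a_fin _ U_deriv U'_left U'_right])
  have P_fin: "finite_measure P" using P by (rule prob_space.axioms(1))
  have P_sf: "sigma_finite_measure P" using P by (rule prob_space_imp_sigma_finite)
  have Q1_M: "Q1 \<in> pricing_measures P K" and Q2_M: "Q2 \<in> pricing_measures P K"
    using Q1 Q2 by (auto simp: hat_M_V_def)
  have "mix_measure t Q1 Q2 \<in> pricing_measures P K"
    by (rule mix_measure_in_pricing_measures[OF P_sf Q1_M Q2_M t])
  moreover have "finite_loss_entropy P (conj_fn a U) (mix_measure t Q1 Q2)"
    using Q1 Q2 by (intro finite_loss_entropy_mix_measure[OF P_fin V _ _ _ _ _ _ _ _ t])
      (auto simp: hat_M_V_def pricing_measures_def prob_space_imp_sigma_finite)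
  ultimately show ?thesis by (simp add: hat_M_V_def)
qed

end
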